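(* Let $m \geq 1$ and let $d$ be a positive integer with $\gcd(d, 2^m-1)=1$. For $a \in \mathrm{GF}(2^m)$ define $$W_d(a) = \sum_{x \in \mathrm{GF}(2^m)} (-1)^{\mathrm{Tr}(x^d + a x)},$$ where $\mathrm{Tr}\colon \mathrm{GF}(2^m)\to\mathrm{GF}(2)$ is the absolute trace. Suppose that $W_d$ takes exactly three distinct values $A$, $B$, $C$ on $\mathrm{GF}(2^m)^*$, and let $N_C$ be the number of $a \in \mathrm{GF}(2^m)^*$ with $W_d(a) = C$. Let $V$ be the set of roots of $1 + x^d + (1+x)^d$ in $\mathrm{GF}(2^m)$. Then $$N_C = \frac{2^{2m} - 2^m(A+B) + (2^m-1)AB}{(C-A)(C-B)}$$ and $$2^{2m}|V| = 2^{2m}(A+B+C) - 2^m(AB+BC+CA) + (2^m-1)ABC.$$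
   Context: $W_d$ is the Walsh transform of the power map $x\mapsto x^d$ on $\mathrm{GF}(2^m)$. *)

theory Defs
  imports "HOL-Analysis.Analysis"
begin

text \<open>Absolute trace from GF(2^m) to GF(2), with values in the prime subfield {0,1} of the field.\<close>
definition abs_trace :: "nat \<Rightarrow> 'a::field \<Rightarrow> 'a" where
  "abs_trace m x = (\<Sum>i<m. x ^ (2 ^ i))"

definition add_char :: "nat \<Rightarrow> 'a::field \<Rightarrow> int" where
  "add_char m y = (if abs_trace m y = 0 then 1 else -1)"

definition walsh :: "nat \<Rightarrow> nat \<Rightarrow> 'a::{field,finite} \<Rightarrow> int" where
  "walsh m d a = (\<Sum>x\<in>UNIV. add_char m (x ^ d + a * x))"

end

theory Submission
  imports Defs "HOL-Computational_Algebra.Polynomial" "HOL-Computational_Algebra.Primes"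
begin

text \<open>
  Orthogonality of the additive characters computes the first three power moments of the Walsh
  transform \<open>W\<close> of any \<open>f\<close> on \<open>GF(q)\<close>, \<open>q = 2\<^sup>m\<close>: the sum of \<open>W\<close> is
  \<open>q (-1)\<^bsup>Tr f(0)\<^esup>\<close>, that of \<open>W\<^sup>2\<close> is \<open>q\<^sup>2\<close>, and that of \<open>W\<^sup>3\<close> is \<open>q\<close> times the
  character sum of \<open>f(x) + f(y) + f(x + y)\<close> over all pairs \<open>(x, y)\<close>. For \<open>f(x) = x\<^sup>d\<close> with
  \<open>x \<mapsto> x\<^sup>d\<close> a permutation, \<open>W(0) = 0\<close>, and the substitution \<open>y = x t\<close> turns that
  pair sum into \<open>q |V|\<close>. If \<open>W\<close> takes only the values \<open>A, B, C\<close> off \<open>0\<close>, then summing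
  \<open>(W - A)(W - B)\<close> counts \<open>N\<^sub>C (C - A)(C - B)\<close> and summing \<open>(W - A)(W - B)(W - C)\<close>
  gives \<open>0\<close>; expanding both in the moments gives the two identities.
\<close>

lemma power_card_minus_one_eq_one:
  fixes x :: "'a::{field,finite}"
  assumes "x \<noteq> 0"
  shows "x ^ (CARD('a) - 1) = 1"
proof -
  let ?S = "UNIV - {0::'a}"
  have "x ^ card ?S * (\<Prod>y\<in>?S. y) = (\<Prod>y\<in>?S. x * y)"
    by (simp add: prod.distrib)
  also have "\<dots> = (\<Prod>y\<in>?S. y)"
    by (rule prod.reindex_bij_witness[of _ "\<lambda>y. y / x" "\<lambda>y. x * y"]) (use assms in auto)
  finally show ?thesis
    by (simp add: card_Diff_singleton prod_zero_iff)
qed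

lemma power_card_eq_self:
  fixes x :: "'a::{field,finite}"
  shows "x ^ CARD('a) = x"
proof (cases "x = 0")
  case False
  have "CARD('a) = Suc (CARD('a) - 1)"
    using finite_UNIV_card_ge_0[where 'a='a] by simp
  then show ?thesis
    using power_card_minus_one_eq_one[OF False] by (metis mult.right_neutral power_Suc)
qed simp

lemma bij_power_coprime:
  fixes d :: nat
  assumes "d > 0" and "coprime d (CARD('a::{field,finite}) - 1)"
  shows "bij (\<lambda>x::'a. x ^ d)"
proof -
  obtain e k where ek: "d * e = (CARD('a) - 1) * k + 1"
    using bezout_nat[of d "CARD('a) - 1"] assms by (auto simp: coprime_iff_gcd_eq_1)
  have "(x ^ d) ^ e = x" for x :: 'a
  proof (cases "x = 0")
    case True
    then show ?thesis using ek by (simp flip: power_mult)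
  next
    case False
    have "(x ^ d) ^ e = (x ^ (CARD('a) - 1)) ^ k * x"
      by (simp add: ek power_add flip: power_mult)
    then show ?thesis using power_card_minus_one_eq_one[OF False] by simp
  qed
  then have "inj (\<lambda>x::'a. x ^ d)"
    by (metis injI)
  then show ?thesis
    by (simp add: bij_def finite_UNIV_inj_surj)
qed

lemma sum_UNIV_power_coprime:
  fixes d :: nat
  assumes "d > 0" and "coprime d (CARD('a::{field,finite}) - 1)"
  shows "(\<Sum>x\<in>UNIV. g (x ^ d :: 'a)) = (\<Sum>x\<in>UNIV. g x)"
  using sum.reindex_bij_betw[OF bij_power_coprime[OF assms], of g] by simp

lemma add_eq_0_iff_eq_CHAR_2:
  assumes "CHAR('a::ring_1) = 2"
  shows "(x::'a) + y = 0 \<longleftrightarrow> y = x"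
  by (metis add_eq_0_iff uminus_CHAR_2[OF assms])

lemma add_self_eq_0_CHAR_2:
  assumes "CHAR('a::ring_1) = 2"
  shows "(x::'a) + x = 0"
  using add_eq_0_iff_eq_CHAR_2[OF assms] by blast

lemma abs_trace_add:
  assumes "CHAR('a::field) = 2"
  shows "abs_trace m (x + y :: 'a) = abs_trace m x + abs_trace m y"
proof -
  have "(x + y) ^ (2 ^ i) = x ^ (2 ^ i) + y ^ (2 ^ i)" for i
    using freshmans_dream'[of "2 ^ i" i x y] assms by simp
  then show ?thesis
    by (simp add: abs_trace_def sum.distrib)
qed

lemma abs_trace_square:
  assumes "CHAR('a::{field,finite}) = 2" and "CARD('a) = 2 ^ m"
  shows "abs_trace m (x :: 'a) ^ 2 = abs_trace m x"
proof -
  have "abs_trace m x ^ 2 = (\<Sum>i<m. (x ^ (2 ^ i)) ^ 2)"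
    unfolding abs_trace_def by (rule freshmans_dream_sum) (simp_all add: assms(1))
  also have "\<dots> = (\<Sum>i<m. x ^ (2 ^ Suc i))"
    by (simp add: mult.commute flip: power_mult)
  also have "\<dots> = abs_trace m x + x ^ (2 ^ m) - x"
    using sum.lessThan_Suc_shift[of "\<lambda>i. x ^ (2 ^ i)" m] by (simp add: abs_trace_def)
  also have "\<dots> = abs_trace m x"
    using power_card_eq_self[of x] assms(2) by simp
  finally show ?thesis .
qed

lemma abs_trace_eq_0_or_1:
  assumes "CHAR('a::{field,finite}) = 2" and "CARD('a) = 2 ^ m"
  shows "abs_trace m (x :: 'a) = 0 \<or> abs_trace m x = 1"
  using abs_trace_square[OF assms, of x]
  by (metis (no_types) left_diff_distrib' mult_cancel_left1 power2_eq_square right_minus_eq)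

text \<open>The trace is a polynomial of degree \<open>2 ^ (m - 1) < CARD('a)\<close>, so it cannot vanish identically.\<close>
lemma abs_trace_not_identically_zero:
  assumes "CARD('a::{field,finite}) = 2 ^ m" and "m \<ge> 1"
  shows "\<exists>x :: 'a. abs_trace m x \<noteq> 0"
proof -
  define p :: "'a poly" where "p = (\<Sum>i<m. monom 1 (2 ^ i))"
  have poly_p: "poly p x = abs_trace m x" for x
    by (simp add: p_def poly_sum poly_monom abs_trace_def)
  have "coeff p (2 ^ (m - 1)) = (\<Sum>i<m. if i = m - 1 then 1 else 0)"
    unfolding p_def coeff_sum coeff_monom by (intro sum.cong) auto
  then have "p \<noteq> 0"
    using assms(2) by auto
  have "degree p \<le> 2 ^ (m - 1)"
    unfolding p_def
    by (rule degree_sum_le) (auto intro: order.trans[OF degree_monom_le] power_increasing)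
  also have "\<dots> < CARD('a)"
    using assms by simp
  finally have "\<not> {x. poly p x = 0} = UNIV"
    using card_poly_roots_bound[OF \<open>p \<noteq> 0\<close>] by auto
  then show ?thesis
    using poly_p by auto
qed

definition walsh_transform :: "nat \<Rightarrow> ('a::{field,finite} \<Rightarrow> 'a) \<Rightarrow> 'a \<Rightarrow> int" where
  "walsh_transform m f a = (\<Sum>x\<in>UNIV. add_char m (f x + a * x))"

lemma walsh_eq_walsh_transform: "walsh m d = walsh_transform m (\<lambda>x. x ^ d)"
  by (simp add: fun_eq_iff walsh_def walsh_transform_def)

lemma add_char_0 [simp]: "add_char m (0::'a::field) = 1"
  by (simp add: add_char_def abs_trace_def power_0_left)

context
  fixes m :: nat
  assumes char2: "CHAR('a::{field,finite}) = 2" and card_eq: "CARD('a) = 2 ^ m" and m_pos: "m \<ge> 1"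
begin

lemmas add_eq_0_iff_eq = add_eq_0_iff_eq_CHAR_2[OF char2]
lemmas add_self_eq_0 = add_self_eq_0_CHAR_2[OF char2]

lemma add_char_add: "add_char m (x + y :: 'a) = add_char m x * add_char m y"
  using abs_trace_eq_0_or_1[OF char2 card_eq, of x] abs_trace_eq_0_or_1[OF char2 card_eq, of y]
    add_self_eq_0[of 1]
  unfolding add_char_def abs_trace_add[OF char2] by auto

lemma sum_add_char: "(\<Sum>x\<in>UNIV. add_char m (x::'a)) = 0"
proof -
  obtain x0 :: 'a where "abs_trace m x0 \<noteq> 0"
    using abs_trace_not_identically_zero[OF card_eq m_pos] by blast
  then have "add_char m x0 = -1"
    by (simp add: add_char_def)
  then have "(\<Sum>x\<in>UNIV. add_char m (x::'a)) = - (\<Sum>x\<in>UNIV. add_char m (x + x0))"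
    by (simp add: add_char_add sum_negf)
  also have "(\<Sum>x\<in>UNIV. add_char m (x + x0)) = (\<Sum>x\<in>UNIV. add_char m (x::'a))"
    by (rule sum.reindex_bij_witness[of _ "\<lambda>x. x - x0" "\<lambda>x. x + x0"]) auto
  finally show ?thesis
    by simp
qed

lemma sum_add_char_mult: "(\<Sum>a\<in>UNIV. add_char m (a * u :: 'a)) = (if u = 0 then int CARD('a) else 0)"
proof (cases "u = 0")
  case False
  have "(\<Sum>a\<in>UNIV. add_char m (a * u)) = (\<Sum>a\<in>UNIV. add_char m (a::'a))"
    by (rule sum.reindex_bij_witness[of _ "\<lambda>a. a / u" "\<lambda>a. a * u"]) (use False in auto)
  with False show ?thesis
    by (simp add: sum_add_char)
qed simp

lemma walsh_transform_eq: "walsh_transform m f a = (\<Sum>x\<in>UNIV. add_char m (f x) * add_char m (a * x :: 'a))"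
  by (simp add: walsh_transform_def add_char_add)

lemma sum_walsh_transform: "(\<Sum>a\<in>UNIV. walsh_transform m f (a::'a)) = int CARD('a) * add_char m (f 0)"
proof -
  have "(\<Sum>a\<in>UNIV. walsh_transform m f a) = (\<Sum>x\<in>UNIV. add_char m (f x) * (\<Sum>a\<in>UNIV. add_char m (a * x)))"
    unfolding walsh_transform_eq sum_distrib_left by (rule sum.swap)
  also have "\<dots> = int CARD('a) * add_char m (f 0)"
    by (simp add: sum_add_char_mult if_distrib cong: if_cong)
  finally show ?thesis .
qed

lemma sum_walsh_transform_square: "(\<Sum>a\<in>UNIV. walsh_transform m f (a::'a) ^ 2) = int CARD('a) ^ 2"
proof -
  have "walsh_transform m f a ^ 2
      = (\<Sum>x\<in>UNIV. \<Sum>y\<in>UNIV. add_char m (f x + f y) * add_char m (a * (x + y)))" for a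
    unfolding power2_eq_square walsh_transform_eq sum_product
    by (intro sum.cong refl) (simp add: add_char_add algebra_simps)
  then have "(\<Sum>a\<in>UNIV. walsh_transform m f a ^ 2)
      = (\<Sum>x\<in>UNIV. \<Sum>a\<in>UNIV. \<Sum>y\<in>UNIV. add_char m (f x + f y) * add_char m (a * (x + y)))"
    using sum.swap by simp
  also have "\<dots> = (\<Sum>x\<in>UNIV. \<Sum>y\<in>UNIV. add_char m (f x + f y) * (\<Sum>a\<in>UNIV. add_char m (a * (x + y))))"
    unfolding sum_distrib_left by (intro sum.cong refl sum.swap)
  also have "\<dots> = int CARD('a) ^ 2"
    by (simp add: sum_add_char_mult add_eq_0_iff_eq add_self_eq_0 if_distrib power2_eq_square
        cong: if_cong)
  finally show ?thesis .
qed

lemma sum_walsh_transform_cube: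
  "(\<Sum>a\<in>UNIV. walsh_transform m f (a::'a) ^ 3)
     = int CARD('a) * (\<Sum>x\<in>UNIV. \<Sum>y\<in>UNIV. add_char m (f x + f y + f (x + y)))"
proof -
  have "walsh_transform m f a ^ 3 = (\<Sum>x\<in>UNIV. \<Sum>y\<in>UNIV. \<Sum>z\<in>UNIV.
          add_char m (f x + f y + f z) * add_char m (a * (x + y + z)))" for a
  proof -
    have "walsh_transform m f a ^ 3 = walsh_transform m f a * (walsh_transform m f a * walsh_transform m f a)"
      by (simp add: power3_eq_cube)
    also have "\<dots> = (\<Sum>x\<in>UNIV. \<Sum>y\<in>UNIV. \<Sum>z\<in>UNIV. (add_char m (f x) * add_char m (a * x)) *
        ((add_char m (f y) * add_char m (a * y)) * (add_char m (f z) * add_char m (a * z))))"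
      by (simp only: walsh_transform_eq sum_product, simp only: sum_distrib_left)
    finally show ?thesis
      by (simp add: add_char_add algebra_simps)
  qed
  then have "(\<Sum>a\<in>UNIV. walsh_transform m f a ^ 3) = (\<Sum>x\<in>UNIV. \<Sum>a\<in>UNIV. \<Sum>y\<in>UNIV. \<Sum>z\<in>UNIV.
          add_char m (f x + f y + f z) * add_char m (a * (x + y + z)))"
    using sum.swap by simp
  also have "\<dots> = (\<Sum>x\<in>UNIV. \<Sum>y\<in>UNIV. \<Sum>a\<in>UNIV. \<Sum>z\<in>UNIV.
          add_char m (f x + f y + f z) * add_char m (a * (x + y + z)))"
    by (intro sum.cong refl sum.swap)
  also have "\<dots> = (\<Sum>x\<in>UNIV. \<Sum>y\<in>UNIV. \<Sum>z\<in>UNIV.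
          add_char m (f x + f y + f z) * (\<Sum>a\<in>UNIV. add_char m (a * (x + y + z))))"
    unfolding sum_distrib_left by (intro sum.cong refl sum.swap)
  also have "\<dots> = int CARD('a) * (\<Sum>x\<in>UNIV. \<Sum>y\<in>UNIV. add_char m (f x + f y + f (x + y)))"
    by (simp add: sum_add_char_mult add_eq_0_iff_eq if_distrib sum_distrib_left mult.commute
        cong: if_cong)
  finally show ?thesis .
qed

context
  fixes d :: nat
  assumes d_pos: "d > 0" and coprime_d: "coprime d (2 ^ m - 1)"
begin

lemma sum_UNIV_power: "(\<Sum>x\<in>UNIV. g (x ^ d :: 'a)) = (\<Sum>x\<in>UNIV. g x)"
  using sum_UNIV_power_coprime d_pos coprime_d card_eq by metis

lemma walsh_zero: "walsh m d (0::'a) = 0"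
  unfolding walsh_def using sum_UNIV_power[of "add_char m"] sum_add_char by simp

lemma sum_add_char_power_triples:
  "(\<Sum>x\<in>UNIV. \<Sum>y\<in>UNIV. add_char m (x ^ d + y ^ d + (x + y) ^ d :: 'a))
     = int CARD('a) * int (card {t::'a. 1 + t ^ d + (1 + t) ^ d = 0})"
proof -
  define c where "c t = 1 + t ^ d + (1 + t) ^ d" for t :: 'a
  have homogeneous: "(\<Sum>y\<in>UNIV. add_char m (x ^ d + y ^ d + (x + y) ^ d))
      = (\<Sum>t\<in>UNIV. add_char m (x ^ d * c t))" for x :: 'a
  proof (cases "x = 0")
    case True
    then show ?thesis
      using d_pos by (simp add: zero_power add_self_eq_0)
  next
    case False
    have "x ^ d + (x * t) ^ d + (x + x * t) ^ d = x ^ d * c t" for t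
    proof -
      have "(x + x * t) ^ d = x ^ d * (1 + t) ^ d"
        by (simp add: distrib_left flip: power_mult_distrib)
      then show ?thesis
        by (simp add: c_def power_mult_distrib algebra_simps)
    qed
    then have "(\<Sum>t\<in>UNIV. add_char m (x ^ d * c t))
        = (\<Sum>y\<in>UNIV. add_char m (x ^ d + y ^ d + (x + y) ^ d))"
      by (intro sum.reindex_bij_witness[of _ "\<lambda>y. y / x" "\<lambda>t. x * t"]) (use False in auto)
    then show ?thesis ..
  qed
  have "(\<Sum>x\<in>UNIV. \<Sum>y\<in>UNIV. add_char m (x ^ d + y ^ d + (x + y) ^ d :: 'a))
      = (\<Sum>t\<in>UNIV. \<Sum>x\<in>UNIV. add_char m (x ^ d * c t))"
    unfolding homogeneous by (rule sum.swap)
  also have "\<dots> = (\<Sum>t\<in>UNIV. \<Sum>x\<in>UNIV. add_char m (x * c t))"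
    by (simp add: sum_UNIV_power[of "\<lambda>x. add_char m (x * _)"])
  also have "\<dots> = int CARD('a) * int (card {t. c t = 0})"
    by (simp add: sum_add_char_mult sum.If_cases)
  finally show ?thesis
    by (simp add: c_def)
qed

lemma sum_nonzero_walsh_powers:
  "(\<Sum>a\<in>UNIV - {0::'a}. walsh m d a) = 2 ^ m"
  "(\<Sum>a\<in>UNIV - {0::'a}. walsh m d a ^ 2) = 2 ^ (2 * m)"
  "(\<Sum>a\<in>UNIV - {0::'a}. walsh m d a ^ 3) = 2 ^ (2 * m) * int (card {t::'a. 1 + t ^ d + (1 + t) ^ d = 0})"
proof -
  have nonzero: "(\<Sum>a\<in>UNIV - {0::'a}. walsh m d a ^ k) = (\<Sum>a\<in>UNIV. walsh m d (a::'a) ^ k)" if "k > 0" for k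
    using sum.remove[of UNIV "0::'a" "\<lambda>a. walsh m d a ^ k"] walsh_zero that by (simp add: zero_power)
  have q: "int CARD('a) = 2 ^ m" "int CARD('a) ^ 2 = 2 ^ (2 * m)"
    using card_eq by (simp_all add: power_mult mult.commute)
  show "(\<Sum>a\<in>UNIV - {0::'a}. walsh m d a) = 2 ^ m"
    using nonzero[of 1] sum_walsh_transform d_pos q
    by (simp add: walsh_eq_walsh_transform zero_power)
  show "(\<Sum>a\<in>UNIV - {0::'a}. walsh m d a ^ 2) = 2 ^ (2 * m)"
    using nonzero[of 2] sum_walsh_transform_square q by (simp add: walsh_eq_walsh_transform)
  show "(\<Sum>a\<in>UNIV - {0::'a}. walsh m d a ^ 3) = 2 ^ (2 * m) * int (card {t::'a. 1 + t ^ d + (1 + t) ^ d = 0})"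
    using nonzero[of 3] sum_walsh_transform_cube sum_add_char_power_triples q
    by (simp add: walsh_eq_walsh_transform power2_eq_square)
qed

end

end

lemma card_level_set_three_valued:
  fixes w :: "'b \<Rightarrow> int"
  assumes "finite S" and "w ` S \<subseteq> {A, B, C}"
  shows "int (card {a\<in>S. w a = C}) * ((C - A) * (C - B))
           = (\<Sum>a\<in>S. w a ^ 2) - (A + B) * (\<Sum>a\<in>S. w a) + A * B * int (card S)"
proof -
  have "int (card {a\<in>S. w a = C}) * ((C - A) * (C - B)) = (\<Sum>a\<in>S. if w a = C then (C - A) * (C - B) else 0)"
    using assms(1) by (simp add: sum.inter_filter[symmetric])
  also have "\<dots> = (\<Sum>a\<in>S. (w a - A) * (w a - B))"
    by (intro sum.cong refl) (use assms(2) in auto)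
  also have "\<dots> = (\<Sum>a\<in>S. w a ^ 2) - (A + B) * (\<Sum>a\<in>S. w a) + A * B * int (card S)"
    by (simp add: power2_eq_square algebra_simps sum.distrib sum_subtractf sum_distrib_left)
  finally show ?thesis .
qed

lemma sum_three_valued_cubic:
  fixes w :: "'b \<Rightarrow> int"
  assumes "w ` S \<subseteq> {A, B, C}"
  shows "(\<Sum>a\<in>S. w a ^ 3) - (A + B + C) * (\<Sum>a\<in>S. w a ^ 2)
           + (A * B + B * C + C * A) * (\<Sum>a\<in>S. w a) - A * B * C * int (card S) = 0"
proof -
  have "(\<Sum>a\<in>S. (w a - A) * (w a - B) * (w a - C)) = 0"
    by (rule sum.neutral) (use assms in auto)
  then show ?thesis
    by (simp add: power2_eq_square power3_eq_cube algebra_simps sum.distrib sum_subtractf sum_distrib_left)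
qed

theorem proposition8:
  fixes m d :: nat and A B C :: int
  assumes "CHAR('a::{field,finite}) = 2"
    and "CARD('a) = 2 ^ m"
    and "m \<ge> 1"
    and "d > 0"
    and "coprime d (2 ^ m - 1)"
    and "A \<noteq> B" "B \<noteq> C" "A \<noteq> C"
    and "(walsh m d :: 'a \<Rightarrow> int) ` (UNIV - {0}) = {A, B, C}"
  shows "real (card {a :: 'a. a \<noteq> 0 \<and> walsh m d a = C})
           = (2 ^ (2 * m) - 2 ^ m * real_of_int (A + B) + (2 ^ m - 1) * real_of_int (A * B))
             / real_of_int ((C - A) * (C - B))
         \<and> 2 ^ (2 * m) * int (card {x :: 'a. 1 + x ^ d + (1 + x) ^ d = 0})
           = 2 ^ (2 * m) * (A + B + C) - 2 ^ m * (A * B + B * C + C * A) + (2 ^ m - 1) * A * B * C"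
proof -
  let ?S = "UNIV - {0::'a}"
  let ?N = "card {a :: 'a. a \<noteq> 0 \<and> walsh m d a = C}"
  have three_valued: "walsh m d ` ?S \<subseteq> {A, B, C}"
    using assms(9) by simp
  have card_S: "int (card ?S) = 2 ^ m - 1"
    using assms(2) by (simp add: card_Diff_singleton of_nat_diff)
  note moments = sum_nonzero_walsh_powers[OF assms(1-5)]
  have "{a \<in> ?S. walsh m d a = C} = {a. a \<noteq> 0 \<and> walsh m d a = C}"
    by auto
  then have "int ?N * ((C - A) * (C - B)) = 2 ^ (2 * m) - (A + B) * 2 ^ m + A * B * (2 ^ m - 1)"
    using card_level_set_three_valued[OF _ three_valued] unfolding moments card_S by simp
  from arg_cong[where f = real_of_int, OF this]
  have "real ?N * real_of_int ((C - A) * (C - B))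
      = 2 ^ (2 * m) - 2 ^ m * real_of_int (A + B) + (2 ^ m - 1) * real_of_int (A * B)"
    by (simp add: algebra_simps)
  moreover have "real_of_int ((C - A) * (C - B)) \<noteq> 0"
    using assms(7,8) by simp
  moreover have "2 ^ (2 * m) * int (card {x :: 'a. 1 + x ^ d + (1 + x) ^ d = 0})
      = 2 ^ (2 * m) * (A + B + C) - 2 ^ m * (A * B + B * C + C * A) + (2 ^ m - 1) * A * B * C"
    using sum_three_valued_cubic[OF three_valued] unfolding moments card_S by (simp add: algebra_simps)
  ultimately show ?thesis
    by (simp add: eq_divide_eq)
qed

end
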